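(* Let $\mathcal{S}\subset\overline{\mathbb{M}}$ be a finite set. Then there is an integer $e_0$ such that for all $e\ge e_0$, $$\big|\Delta^{(m-1)}_e(\mathcal{S})\setminus\Delta^{(m-1)}_e(\phi(\mathcal{S}))\big|\le\big|\Delta^{(m)}_e(\phi(\mathcal{S}))\setminus\Delta^{(m)}_e(\mathcal{S})\big|.$$
   Context: $q$ is a prime power, $m$ a positive integer. A monomial $\mu\neq1$ in $x_0,\dots,x_m$ written $x_0^{a_0}\cdots x_k^{a_k}$ with $a_k>0$ is projectively reduced if $a_0,\dots,a_{k-1}\le q-1$; $1$ is projectively reduced. $\overline{\mathbb{M}}$ is the set of projectively reduced monomials, $\overline{\mathbb{M}}_e$ those of degree $e$. $\overline{\mathbb{M}}^{(0)}=\{x_0^a:a\ge0\}$, and for $1\le\ell\le m$, $\overline{\mathbb{M}}^{(\ell)}=\{x_0^{a_0}\cdots x_\ell^{a_\ell}\in\overline{\mathbb{M}}:a_\ell>0\}$; $\overline{\mathbb{M}}^{(\ell)}_e=\overline{\mathbb{M}}^{(\ell)}\cap\overline{\mathbb{M}}_e$. For a set $\mathcal{S}$ of monomials, $\Delta_e(\mathcal{S})=\{\mu\in\overline{\mathbb{M}}_e:\text{no }\nu\in\mathcal{S}\text{ divides }\mu\}$ and $\Delta^{(\ell)}_e(\mathcal{S})=\Delta_e(\mathcal{S})\cap\overline{\mathbb{M}}^{(\ell)}_e$. Given $\mathcal{S}\subseteq\overline{\mathbb{M}}$, for $\mu=x_0^{i_0}\cdots x_m^{i_m}\in\mathcal{S}$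 set $\phi(\mu)=\mu x_{m-1}/x_m$ if $x_0^{i_0}\cdots x_{m-2}^{i_{m-2}}x_{m-1}^{i_{m-1}+i_m}\notin\mathcal{S}$ and $i_{m-1}+1<q$, and $\phi(\mu)=\mu$ otherwise; $\phi(\mathcal{S})$ is the image. *)

theory Defs
  imports "HOL-Number_Theory.Prime_Powers"
begin

text \<open>A monomial in x_0,...,x_m is represented by its exponent vector
  a :: nat \<Rightarrow> nat, with a i = 0 for i > m.  The monomial 1 is the zero vector.\<close>

type_synonym monom = "nat \<Rightarrow> nat"

definition monoms :: "nat \<Rightarrow> monom set" where
  "monoms m = {a. \<forall>i>m. a i = 0}"

definition mdeg :: "nat \<Rightarrow> monom \<Rightarrow> nat" where
  "mdeg m a = (\<Sum>i\<le>m. a i)"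

definition mdvd :: "monom \<Rightarrow> monom \<Rightarrow> bool" where
  "mdvd b a \<longleftrightarrow> (\<forall>i. b i \<le> a i)"

definition proj_reduced :: "nat \<Rightarrow> nat \<Rightarrow> monom \<Rightarrow> bool" where
  "proj_reduced q m a \<longleftrightarrow> a \<in> monoms m \<and>
     ((\<forall>i. a i = 0) \<or>
      (\<exists>k\<le>m. a k > 0 \<and> (\<forall>i>k. a i = 0) \<and> (\<forall>i<k. a i \<le> q - 1)))"

definition PR :: "nat \<Rightarrow> nat \<Rightarrow> monom set" where
  "PR q m = {a. proj_reduced q m a}"

definition PR_deg :: "nat \<Rightarrow> nat \<Rightarrow> nat \<Rightarrow> monom set" where
  "PR_deg q m e = {a \<in> PR q m. mdeg m a = e}"

definition PR_level :: "nat \<Rightarrow> nat \<Rightarrow> nat \<Rightarrow> monom set" where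
  "PR_level q m l =
     (if l = 0 then {a \<in> monoms m. \<forall>i>0. a i = 0}
      else {a \<in> PR q m. a l > 0 \<and> (\<forall>i>l. a i = 0)})"

definition Delta :: "nat \<Rightarrow> nat \<Rightarrow> nat \<Rightarrow> monom set \<Rightarrow> monom set" where
  "Delta q m e S = {a \<in> PR_deg q m e. \<forall>b\<in>S. \<not> mdvd b a}"

definition Delta_level :: "nat \<Rightarrow> nat \<Rightarrow> nat \<Rightarrow> nat \<Rightarrow> monom set \<Rightarrow> monom set" where
  "Delta_level q m l e S = Delta q m e S \<inter> PR_level q m l"

definition phi :: "nat \<Rightarrow> nat \<Rightarrow> monom set \<Rightarrow> monom \<Rightarrow> monom" where
  "phi q m S a =
     (if (a(m - 1 := a (m - 1) + a m, m := 0)) \<notin> S \<and> a (m - 1) + 1 < q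
      then a(m - 1 := a (m - 1) + 1, m := a m - 1)
      else a)"

end

(*
  If a monomial a of level m - 1 is divisible by some phi(b) but by no element
  of S, then b was genuinely shifted: b involves x_m and b_(m-1) + 1 < q.  Call the elements c of S
  with c_m > 0 whose part outside x_(m-1), x_m divides a the candidates for a, and let s be the
  least exponent of x_(m-1) among them.  For large e the exponent of x_(m-1) in a is large, and
  moving all but s of it onto x_m yields a monomial of level m that the minimising candidate
  divides but no element of phi(S) divides.  Merging x_m back into x_(m-1) undoes the move, so
  this is an injection between the two difference sets.
*)
theory Submission
  imports Defs "HOL-Library.FuncSet"
begin

lemma finite_monoms_mdeg: "finite {a \<in> monoms m. mdeg m a = e}"
proof -
  let ?extend = "\<lambda>g i. if i \<le> m then g i else 0"
  have "{a \<in> monoms m. mdeg m a = e} \<subseteq> ?extend ` PiE {..m} (\<lambda>_. {..e})"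
  proof
    fix a assume "a \<in> {a \<in> monoms m. mdeg m a = e}"
    then have zero: "\<forall>i>m. a i = 0" and deg: "(\<Sum>i\<le>m. a i) = e"
      by (auto simp: monoms_def mdeg_def)
    have "a i \<le> e" if "i \<le> m" for i
      using deg member_le_sum[of i "{..m}" a] that by auto
    then have "restrict a {..m} \<in> PiE {..m} (\<lambda>_. {..e})" by auto
    moreover have "a = ?extend (restrict a {..m})"
      using zero by (auto simp: fun_eq_iff not_le)
    ultimately show "a \<in> ?extend ` PiE {..m} (\<lambda>_. {..e})" by blast
  qed
  then show ?thesis by (rule finite_subset) (auto intro: finite_PiE)
qed

lemma finite_Delta_level: "finite (Delta_level q m l e S)"
  by (rule finite_subset[OF _ finite_monoms_mdeg[of m e]])
    (auto simp: Delta_level_def Delta_def PR_deg_def PR_def proj_reduced_def)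

lemma mem_PR_level_iff:
  assumes "0 < l" "l \<le> m"
  shows "a \<in> PR_level q m l \<longleftrightarrow> 0 < a l \<and> (\<forall>i>l. a i = 0) \<and> (\<forall>i<l. a i \<le> q - 1)"
proof
  assume "a \<in> PR_level q m l"
  then have pos: "0 < a l" and zero: "\<forall>i>l. a i = 0" and "proj_reduced q m a"
    using assms by (auto simp: PR_level_def PR_def)
  then obtain k where "a k > 0" "\<forall>i>k. a i = 0" "\<forall>i<k. a i \<le> q - 1"
    unfolding proj_reduced_def by (metis less_irrefl)
  moreover from this have "k = l"
    using pos zero by (metis less_irrefl nat_neq_iff)
  ultimately show "0 < a l \<and> (\<forall>i>l. a i = 0) \<and> (\<forall>i<l. a i \<le> q - 1)" by blast
next
  assume "0 < a l \<and> (\<forall>i>l. a i = 0) \<and> (\<forall>i<l. a i \<le> q - 1)"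
  then show "a \<in> PR_level q m l"
    using assms by (auto simp: PR_level_def PR_def proj_reduced_def monoms_def)
qed

lemma PR_level_bounds:
  assumes "l \<le> m" "a \<in> PR_level q m l"
  shows "\<forall>i>l. a i = 0" "\<forall>i<l. a i \<le> q - 1"
  using assms mem_PR_level_iff[of l m a q] by (cases "l = 0"; auto simp: PR_level_def)+

lemma PR_level_subset_PR:
  assumes "l \<le> m"
  shows "PR_level q m l \<subseteq> PR q m"
proof (cases "l = 0")
  case True
  have "proj_reduced q m a" if "a \<in> monoms m" and zero: "\<forall>i>0. a i = 0" for a
  proof (cases "a 0 = 0")
    case True
    then have "\<forall>i. a i = 0" using zero by (metis gr0I)
    then show ?thesis using that by (simp add: proj_reduced_def)
  next
    case False
    then show ?thesis using that unfolding proj_reduced_def by (intro conjI disjI2 exI[of _ 0]) auto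
  qed
  then show ?thesis using True by (auto simp: PR_level_def PR_def)
qed (auto simp: PR_level_def)

lemma Delta_level_eq:
  assumes "l \<le> m"
  shows "Delta_level q m l e S = {a \<in> PR_level q m l. mdeg m a = e \<and> (\<forall>b\<in>S. \<not> mdvd b a)}"
  using PR_level_subset_PR[OF assms] by (auto simp: Delta_level_def Delta_def PR_deg_def)

lemma mdeg_Suc: "mdeg (Suc p) a = (\<Sum>i<p. a i) + a p + a (Suc p)"
  by (simp add: mdeg_def lessThan_Suc_atMost[symmetric])

text \<open>With m = Suc p, the indices p and Suc p stand for x_(m-1) and x_m.\<close>

definition collapse :: "nat \<Rightarrow> monom \<Rightarrow> monom" where
  "collapse p a = a(p := a p + a (Suc p), Suc p := 0)"

definition split_at :: "nat \<Rightarrow> nat \<Rightarrow> monom \<Rightarrow> monom" where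
  "split_at p s a = a(p := s, Suc p := a p - s)"

lemma phi_Suc:
  "phi q (Suc p) S a =
     (if collapse p a \<notin> S \<and> a p + 1 < q then a(p := a p + 1, Suc p := a (Suc p) - 1) else a)"
  by (simp add: phi_def collapse_def)

lemma collapse_eq_self: "a (Suc p) = 0 \<Longrightarrow> collapse p a = a"
  by (auto simp: collapse_def fun_eq_iff)

lemma collapse_split_at:
  assumes "a (Suc p) = 0" "s \<le> a p"
  shows "collapse p (split_at p s a) = a"
  using assms by (auto simp: collapse_def split_at_def fun_eq_iff)

lemma mdeg_split_at:
  assumes "a (Suc p) = 0" "s \<le> a p"
  shows "mdeg (Suc p) (split_at p s a) = mdeg (Suc p) a"
proof -
  have "(\<Sum>i<p. split_at p s a i) = (\<Sum>i<p. a i)"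
    by (rule sum.cong) (auto simp: split_at_def)
  then show ?thesis using assms by (simp add: mdeg_Suc split_at_def)
qed

lemma mdvd_split_at_iff:
  "mdvd b (split_at p s a) \<longleftrightarrow>
     b p \<le> s \<and> b (Suc p) \<le> a p - s \<and> (\<forall>i. i \<noteq> p \<longrightarrow> i \<noteq> Suc p \<longrightarrow> b i \<le> a i)"
  unfolding mdvd_def split_at_def by (metis fun_upd_apply n_not_Suc_n)

lemma split_at_mem_PR_level:
  assumes "a \<in> PR_level q (Suc p) p" "s < q" "s < a p"
  shows "split_at p s a \<in> PR_level q (Suc p) (Suc p)"
  using PR_level_bounds[OF _ assms(1)] assms(2,3)
  unfolding mem_PR_level_iff[OF zero_less_Suc order_refl]
  by (auto simp: split_at_def less_Suc_eq)

definition candidates :: "nat \<Rightarrow> monom set \<Rightarrow> monom \<Rightarrow> monom set" where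
  "candidates p S a =
     {c \<in> S. 0 < c (Suc p) \<and> (\<forall>i. i \<noteq> p \<longrightarrow> i \<noteq> Suc p \<longrightarrow> c i \<le> a i)}"

lemma phi_divisor_is_candidate:
  assumes "b \<in> S" "mdvd (phi q (Suc p) S b) a" "\<not> mdvd b a"
  shows "b \<in> candidates p S a" "b p + 1 < q"
proof -
  have shifted: "collapse p b \<notin> S" "b p + 1 < q"
    and phi_b: "phi q (Suc p) S b = b(p := b p + 1, Suc p := b (Suc p) - 1)"
    using assms(2,3) by (auto simp: phi_Suc split: if_splits)
  have "b (Suc p) \<noteq> 0" using shifted(1) assms(1) collapse_eq_self by metis
  moreover have "b i \<le> a i" if "i \<noteq> p" "i \<noteq> Suc p" for i
    using assms(2) that unfolding phi_b mdvd_def by (metis fun_upd_other)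
  ultimately show "b \<in> candidates p S a" using assms(1) by (auto simp: candidates_def)
  show "b p + 1 < q" by (fact shifted(2))
qed

text \<open>A shifted element of S dividing \<open>split_at p s a\<close> would be a candidate with smaller
  exponent than s; an unshifted one would, after collapsing, divide a.\<close>

lemma not_mdvd_phi_split_at:
  assumes not_dvd: "\<forall>c\<in>S. \<not> mdvd c a"
    and min: "\<forall>c\<in>candidates p S a. s \<le> c p"
    and "s + 1 < q" and room: "\<forall>c\<in>S. s + c (Suc p) \<le> a p"
    and "c \<in> S"
  shows "\<not> mdvd (phi q (Suc p) S c) (split_at p s a)"
proof
  assume dvd: "mdvd (phi q (Suc p) S c) (split_at p s a)"
  show False
  proof (cases "collapse p c \<notin> S \<and> c p + 1 < q")
    case True
    then have "c p + 1 \<le> s" and off: "\<forall>i. i \<noteq> p \<longrightarrow> i \<noteq> Suc p \<longrightarrow> c i \<le> a i"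
      using dvd by (auto simp: phi_Suc mdvd_split_at_iff)
    moreover have "c (Suc p) \<noteq> 0"
      using True \<open>c \<in> S\<close> collapse_eq_self by metis
    ultimately have "c \<in> candidates p S a" "c p < s"
      using \<open>c \<in> S\<close> by (auto simp: candidates_def)
    then show False using min by fastforce
  next
    case False
    then have "phi q (Suc p) S c = c" by (auto simp: phi_Suc)
    then have "mdvd c (split_at p s a)" using dvd by simp
    then have "c p \<le> s" and off: "\<forall>i. i \<noteq> p \<longrightarrow> i \<noteq> Suc p \<longrightarrow> c i \<le> a i"
      by (auto simp: mdvd_split_at_iff)
    show False
    proof (cases "c (Suc p) = 0")
      case True
      then have "mdvd c a"
        using off \<open>c p \<le> s\<close> room \<open>c \<in> S\<close> unfolding mdvd_def by (metis add_leD1 le_trans le0)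
      then show False using not_dvd \<open>c \<in> S\<close> by blast
    next
      case nonzero: False
      then have "c \<in> candidates p S a" using off \<open>c \<in> S\<close> by (auto simp: candidates_def)
      then have "c p = s" using min \<open>c p \<le> s\<close> by fastforce
      then have "collapse p c \<in> S" using False \<open>s + 1 < q\<close> by auto
      moreover have "mdvd (collapse p c) a"
        using off room \<open>c \<in> S\<close> \<open>c p = s\<close> unfolding mdvd_def collapse_def by auto
      ultimately show False using not_dvd by blast
    qed
  qed
qed

lemma split_at_min_candidate:
  fixes p :: nat and S :: "monom set" and a :: monom
  defines "s \<equiv> Min ((\<lambda>c. c p) ` candidates p S a)"
  assumes "finite S" and bound: "\<forall>c\<in>S. c (Suc p) \<le> N" and large: "p * (q - 1) + N + q \<le> e"
    and a: "a \<in> Delta_level q (Suc p) p e S - Delta_level q (Suc p) p e (phi q (Suc p) S ` S)"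
  shows "split_at p s a \<in>
           Delta_level q (Suc p) (Suc p) e (phi q (Suc p) S ` S) - Delta_level q (Suc p) (Suc p) e S"
    and "collapse p (split_at p s a) = a"
proof -
  have level: "a \<in> PR_level q (Suc p) p" and deg: "mdeg (Suc p) a = e"
    and not_dvd: "\<forall>c\<in>S. \<not> mdvd c a" and "\<exists>b\<in>S. mdvd (phi q (Suc p) S b) a"
    using a by (auto simp: Delta_level_eq)
  then obtain b where b: "b \<in> candidates p S a" "b p + 1 < q"
    using phi_divisor_is_candidate by blast
  have fin: "finite ((\<lambda>c. c p) ` candidates p S a)"
    using \<open>finite S\<close> by (simp add: candidates_def)
  have min: "\<forall>c\<in>candidates p S a. s \<le> c p"
    using fin by (simp add: s_def)
  then have "s + 1 < q" using b by fastforce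
  have "s \<in> (\<lambda>c. c p) ` candidates p S a"
    unfolding s_def using fin b(1) by (intro Min_in) auto
  then obtain c0 where c0: "c0 \<in> candidates p S a" "c0 p = s" by blast
  have top: "a (Suc p) = 0" and low: "\<forall>i<p. a i \<le> q - 1"
    using PR_level_bounds[OF _ level] by auto
  have "(\<Sum>i<p. a i) \<le> p * (q - 1)"
    using sum_bounded_above[of "{..<p}" a "q - 1"] low by auto
  then have "N + q \<le> a p" using deg large top by (simp add: mdeg_Suc)
  then have room: "\<forall>c\<in>S. s + c (Suc p) \<le> a p" and "s < a p"
    using bound \<open>s + 1 < q\<close> by fastforce+
  have "split_at p s a \<in> PR_level q (Suc p) (Suc p)"
    using split_at_mem_PR_level[OF level] \<open>s + 1 < q\<close> \<open>s < a p\<close> by simp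
  moreover have "mdeg (Suc p) (split_at p s a) = e"
    using mdeg_split_at top \<open>s < a p\<close> deg by simp
  moreover have "\<forall>c\<in>S. \<not> mdvd (phi q (Suc p) S c) (split_at p s a)"
    using not_mdvd_phi_split_at[OF not_dvd min \<open>s + 1 < q\<close> room] by blast
  moreover have "c0 \<in> S" "mdvd c0 (split_at p s a)"
    using c0 room by (auto simp: candidates_def mdvd_split_at_iff)
  ultimately show "split_at p s a \<in>
      Delta_level q (Suc p) (Suc p) e (phi q (Suc p) S ` S) - Delta_level q (Suc p) (Suc p) e S"
    by (auto simp: Delta_level_eq)
  show "collapse p (split_at p s a) = a"
    using collapse_split_at top \<open>s < a p\<close> by simp
qed

theorem proposition4p10:
  fixes q m :: nat and S :: "monom set"
  assumes "primepow q" and "m \<ge> 1"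
    and "S \<subseteq> PR q m" and "finite S"
  shows "\<exists>e0::nat. \<forall>e\<ge>e0.
     card (Delta_level q m (m - 1) e S - Delta_level q m (m - 1) e (phi q m S ` S))
       \<le> card (Delta_level q m m e (phi q m S ` S) - Delta_level q m m e S)"
proof -
  obtain p where m: "m = Suc p" using \<open>m \<ge> 1\<close> by (cases m) auto
  define N where "N = Max ((\<lambda>c. c m) ` S)"
  have bound: "\<forall>c\<in>S. c (Suc p) \<le> N" using \<open>finite S\<close> by (simp add: N_def m)
  show ?thesis
  proof (intro exI allI impI)
    fix e assume large: "p * (q - 1) + N + q \<le> e"
    let ?D1 = "Delta_level q m p e S - Delta_level q m p e (phi q m S ` S)"
    let ?D2 = "Delta_level q m m e (phi q m S ` S) - Delta_level q m m e S"
    let ?f = "\<lambda>a. split_at p (Min ((\<lambda>c. c p) ` candidates p S a)) a"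
    have maps: "?f a \<in> ?D2" and inverse: "collapse p (?f a) = a" if "a \<in> ?D1" for a
      using split_at_min_candidate[OF \<open>finite S\<close> bound large, of a] that by (simp_all add: m)
    have "inj_on ?f ?D1" by (rule inj_on_inverseI[of _ "collapse p"]) (rule inverse)
    moreover have "?f ` ?D1 \<subseteq> ?D2" using maps by blast
    ultimately have "card ?D1 \<le> card ?D2"
      by (intro card_inj_on_le) (auto intro: finite_Delta_level)
    then show "card (Delta_level q m (m - 1) e S - Delta_level q m (m - 1) e (phi q m S ` S))
       \<le> card ?D2" by (simp add: m)
  qed
qed

end
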